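(* Let $\Omega$ be a state space with finitely many extreme points and positive cone $V_+$, and let $(\cdot,\cdot)$ be an inner product on $V$. Suppose linear maps $J,K:V\to V$ are strictly positive with respect to $(\cdot,\cdot)$ and satisfy $J(V_+)=K(V_+)=V^{*int}_{+(\cdot,\cdot)}$. Then for each extreme point $\omega^{\mathrm{ext}}$ of $\Omega$ there exists $\mu(\omega^{\mathrm{ext}})>0$ such that $K(\omega^{\mathrm{ext}})=\mu(\omega^{\mathrm{ext}})J(\omega^{\mathrm{ext}})$.
   Context: $V=\mathbb R^{N+1}$. A state space $\Omega\subset V$ is a compact convex set with $\mathrm{span}(\Omega)=V$ and $0\notin\mathrm{aff}(\Omega)$; $V_+=\{\lambda\omega:\lambda\ge0,\omega\in\Omega\}$; $V^{*int}_{+(\cdot,\cdot)}=\{y\in V:(x,y)\ge0\ \forall x\in V_+\}$. A linear map $J$ is strictly positive with respect to $(\cdot,\cdot)$ if $(x,Jy)=(Jx,y)$ for all $x,y$ and $(x,Jx)>0$ for all nonzero $x$. *)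

theory Defs
  imports "HOL-Analysis.Analysis"
begin

definition is_inner_product :: "('a::real_vector \<Rightarrow> 'a \<Rightarrow> real) \<Rightarrow> bool" where
  "is_inner_product ip \<longleftrightarrow> bilinear ip \<and> (\<forall>x y. ip x y = ip y x) \<and> (\<forall>x. x \<noteq> 0 \<longrightarrow> ip x x > 0)"

definition state_space :: "'a::euclidean_space set \<Rightarrow> bool" where
  "state_space \<Omega> \<longleftrightarrow> compact \<Omega> \<and> convex \<Omega> \<and> span \<Omega> = UNIV \<and> 0 \<notin> affine hull \<Omega>"

definition pos_cone :: "'a::real_vector set \<Rightarrow> 'a set" where
  "pos_cone \<Omega> = {l *\<^sub>R w | l w. l \<ge> 0 \<and> w \<in> \<Omega>}"

definition internal_dual_cone :: "('a \<Rightarrow> 'a \<Rightarrow> real) \<Rightarrow> 'a set \<Rightarrow> 'a set" where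
  "internal_dual_cone ip C = {y. \<forall>x\<in>C. ip x y \<ge> 0}"

definition strictly_positive :: "('a::real_vector \<Rightarrow> 'a \<Rightarrow> real) \<Rightarrow> ('a \<Rightarrow> 'a) \<Rightarrow> bool" where
  "strictly_positive ip J \<longleftrightarrow> (\<forall>x y. ip x (J y) = ip (J x) y) \<and> (\<forall>x. x \<noteq> 0 \<longrightarrow> ip x (J x) > 0)"

end

theory Submission
  imports Defs
begin

(*
  Since J and K map the cone V_+ onto the same cone, M = J^-1 K maps V_+ onto itself and
  hence permutes its extreme rays, each of which is spanned by an extreme point of \<Omega>.
  With finitely many extreme points, the iterates M^k \<omega> of an extreme point \<omega> must
  revisit a ray: M^m u = c u for u = M^a \<omega>, m > 0, c > 0. But M is self-adjoint and
  positive definite for the form (x, J y), and for such an operator an eigenvector of M^m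
  is already an eigenvector of M, with eigenvalue c^(1/m). As M^a is injective,
  M \<omega> = c^(1/m) \<omega>, i.e. K \<omega> = c^(1/m) J \<omega>.
*)

lemma linear_funpow:
  fixes M :: "'a::real_vector \<Rightarrow> 'a"
  assumes "linear M"
  shows "linear (M ^^ k)"
proof (induction k)
  case 0
  show ?case using linear_id[unfolded id_def] by simp
next
  case (Suc k)
  show ?case unfolding funpow.simps(2) by (rule linear_compose[OF Suc.IH assms])
qed

lemma positive_definite_imp_inj:
  fixes M :: "'a::real_vector \<Rightarrow> 'a" and B :: "'a \<Rightarrow> 'a \<Rightarrow> real"
  assumes "linear M" "\<And>x. linear (B x)" "\<And>x. x \<noteq> 0 \<Longrightarrow> B x (M x) > 0"
  shows "inj M"
  unfolding linear_injective_0[OF assms(1)]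
proof (intro allI impI)
  fix x assume "M x = 0"
  then have "B x (M x) = 0" using linear_0[OF assms(2)] by simp
  then show "x = 0" using assms(3)[of x] by (cases "x = 0") auto
qed

lemma adjoint_funpow:
  fixes M :: "'a \<Rightarrow> 'a" and B :: "'a \<Rightarrow> 'a \<Rightarrow> real"
  assumes adj: "\<And>x y. B x (M y) = B (M x) y"
  shows "B x ((M ^^ (i + j)) y) = B ((M ^^ i) x) ((M ^^ j) y)"
proof (induction i arbitrary: x)
  case (Suc i)
  have "B x ((M ^^ (Suc i + j)) y) = B (M x) ((M ^^ (i + j)) y)" by (simp add: adj)
  also have "\<dots> = B ((M ^^ Suc i) x) ((M ^^ j) y)" by (simp add: Suc funpow_swap1)
  finally show ?case .
qed simp

lemma adjoint_funpow_nonneg: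
  fixes M :: "'a \<Rightarrow> 'a" and B :: "'a \<Rightarrow> 'a \<Rightarrow> real"
  assumes adj: "\<And>x y. B x (M y) = B (M x) y"
    and B_nonneg: "\<And>x. B x x \<ge> 0" and M_nonneg: "\<And>x. B x (M x) \<ge> 0"
  shows "B x ((M ^^ k) x) \<ge> 0"
proof -
  have "\<exists>j. k = j + j \<or> k = j + Suc j" by presburger
  then obtain j where "k = j + j \<or> k = j + Suc j" ..
  then show ?thesis
    using adjoint_funpow[where B = B and M = M, OF adj, of x j j]
      adjoint_funpow[where B = B and M = M, OF adj, of x j "Suc j"] B_nonneg M_nonneg
    by auto
qed

lemma funpow_minus_power_factor:
  fixes M :: "'a::real_vector \<Rightarrow> 'a"
  assumes "linear M"
  shows "(\<Sum>k<m. l ^ k *\<^sub>R (M ^^ (m - 1 - k)) (M u - l *\<^sub>R u)) = (M ^^ m) u - l ^ m *\<^sub>R u"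
proof -
  define g where "g k = l ^ k *\<^sub>R (M ^^ (m - k)) u" for k
  have "l ^ k *\<^sub>R (M ^^ (m - 1 - k)) (M u - l *\<^sub>R u) = g k - g (Suc k)" if "k < m" for k
  proof -
    have "m - k = Suc (m - 1 - k)" using that by simp
    then show ?thesis
      using linear_funpow[OF assms, of "m - 1 - k"]
      by (simp add: g_def linear_diff linear_scale funpow_swap1 scaleR_diff_right)
  qed
  then have "(\<Sum>k<m. l ^ k *\<^sub>R (M ^^ (m - 1 - k)) (M u - l *\<^sub>R u)) = (\<Sum>k<m. g k - g (Suc k))"
    by simp
  also have "\<dots> = g 0 - g m" by (rule sum_lessThan_telescope')
  finally show ?thesis by (simp add: g_def)
qed

lemma funpow_eigenvector_imp_eigenvector:
  fixes M :: "'a::real_vector \<Rightarrow> 'a" and B :: "'a \<Rightarrow> 'a \<Rightarrow> real"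
  assumes linM: "linear M" and B_linear: "\<And>x. linear (B x)"
    and B_pos: "\<And>x. x \<noteq> 0 \<Longrightarrow> B x x > 0" and adj: "\<And>x y. B x (M y) = B (M x) y"
    and M_nonneg: "\<And>x. B x (M x) \<ge> 0"
    and "m > 0" "c > 0" and u: "(M ^^ m) u = c *\<^sub>R u"
  shows "M u = root m c *\<^sub>R u"
proof (rule ccontr)
  define l where "l = root m c"
  define v where "v = M u - l *\<^sub>R u"
  assume "M u \<noteq> root m c *\<^sub>R u"
  then have "v \<noteq> 0" by (simp add: v_def l_def)
  have l: "l > 0" "l ^ m = c" using \<open>m > 0\<close> \<open>c > 0\<close> by (simp_all add: l_def real_root_pow_pos)
  have B_nonneg: "B x x \<ge> 0" for x
    using B_pos[of x] linear_0[OF B_linear] by (cases "x = 0") auto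
  have "(\<Sum>k<m. l ^ k *\<^sub>R (M ^^ (m - 1 - k)) v) = 0"
    using funpow_minus_power_factor[OF linM, where m = m and l = l and u = u] u l by (simp add: v_def)
  \<comment> \<open>pair with v: all terms are nonnegative and the one for k = m - 1 is positive\<close>
  then have "0 = B v (\<Sum>k<m. l ^ k *\<^sub>R (M ^^ (m - 1 - k)) v)"
    using linear_0[OF B_linear] by simp
  also have "\<dots> = (\<Sum>k<m. l ^ k * B v ((M ^^ (m - 1 - k)) v))"
    using B_linear[of v] by (simp add: linear_sum linear_scale)
  also have "\<dots> \<ge> l ^ (m - 1) * B v ((M ^^ (m - 1 - (m - 1))) v)"
    using \<open>m > 0\<close> l adjoint_funpow_nonneg[where B = B and M = M, OF adj B_nonneg M_nonneg]
    by (intro member_le_sum) auto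
  finally have "l ^ (m - 1) * B v v \<le> 0" by simp
  moreover have "l ^ (m - 1) * B v v > 0" using l B_pos[OF \<open>v \<noteq> 0\<close>] by simp
  ultimately show False by simp
qed

lemma exists_proportional_pair:
  fixes f :: "nat \<Rightarrow> 'a::real_vector"
  assumes "finite E" and "\<And>k. \<exists>t>0. \<exists>e\<in>E. f k = t *\<^sub>R e"
  shows "\<exists>a b c. a < b \<and> c > 0 \<and> f b = c *\<^sub>R f a"
proof -
  obtain T G where T: "\<And>k. T k > 0" and G: "\<And>k. G k \<in> E" and f: "\<And>k. f k = T k *\<^sub>R G k"
    using assms(2) by metis
  have "\<not> inj G"
    using range_inj_infinite finite_subset[OF _ \<open>finite E\<close>] G by blast
  then obtain a b where "a < b" "G a = G b"
    unfolding inj_def by (metis nat_neq_iff)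
  then have "f b = (T b / T a) *\<^sub>R f a" using T[of a] by (simp add: f)
  then show ?thesis using \<open>a < b\<close> T by (meson divide_pos_pos)
qed

definition generates_extreme_ray :: "'a::real_vector set \<Rightarrow> 'a \<Rightarrow> bool" where
  "generates_extreme_ray P x \<longleftrightarrow>
     x \<in> P \<and> x \<noteq> 0 \<and> (\<forall>a\<in>P. \<forall>b\<in>P. a + b = x \<longrightarrow> (\<exists>s. a = s *\<^sub>R x))"

lemma pos_coneI: "l \<ge> 0 \<Longrightarrow> w \<in> \<Omega> \<Longrightarrow> l *\<^sub>R w \<in> pos_cone \<Omega>"
  unfolding pos_cone_def by blast

lemma pos_coneE:
  assumes "x \<in> pos_cone \<Omega>"
  obtains l w where "l \<ge> 0" "w \<in> \<Omega>" "x = l *\<^sub>R w"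
  using assms unfolding pos_cone_def by blast

lemma scaleR_mem_affine_hull_eq_1:
  assumes "0 \<notin> affine hull S" "w \<in> affine hull S" "c *\<^sub>R w \<in> affine hull S"
  shows "c = 1"
proof (rule ccontr)
  assume "c \<noteq> 1"
  have "(1 / (1 - c)) *\<^sub>R (c *\<^sub>R w) + (- c / (1 - c)) *\<^sub>R w \<in> affine hull S"
    using \<open>c \<noteq> 1\<close> by (intro mem_affine[OF affine_affine_hull assms(3,2)]) (simp add: field_simps)
  also have "(1 / (1 - c)) *\<^sub>R (c *\<^sub>R w) + (- c / (1 - c)) *\<^sub>R w = 0"
    by simp
  finally show False using assms(1) by simp
qed

lemma extreme_point_convex_combination:
  assumes "w extreme_point_of S" "p \<in> S" "q \<in> S" "0 \<le> \<alpha>" "\<alpha> \<le> 1"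
    and w: "w = \<alpha> *\<^sub>R p + (1 - \<alpha>) *\<^sub>R q"
  shows "\<alpha> = 0 \<or> p = w"
proof (rule ccontr)
  assume "\<not> (\<alpha> = 0 \<or> p = w)"
  then have "\<alpha> \<noteq> 0" "\<alpha> \<noteq> 1" "p \<noteq> q" using w by (auto simp flip: scaleR_add_left)
  then have "w \<in> open_segment p q"
    using assms(4,5) w unfolding in_segment by (intro conjI exI[of _ "1 - \<alpha>"]) auto
  then show False using assms(1-3) unfolding extreme_point_of_def by blast
qed

lemma extreme_point_generates_extreme_ray:
  assumes aff: "0 \<notin> affine hull \<Omega>" and w: "w extreme_point_of \<Omega>"
  shows "generates_extreme_ray (pos_cone \<Omega>) w"
proof -
  have hull: "\<Omega> \<subseteq> affine hull \<Omega>" by (rule hull_subset)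
  have "w \<in> \<Omega>" using w by (simp add: extreme_point_of_def)
  then have "w \<noteq> 0" using aff hull by auto
  have "\<exists>s. a = s *\<^sub>R w"
    if a: "a \<in> pos_cone \<Omega>" and b: "b \<in> pos_cone \<Omega>" and ab: "a + b = w" for a b
  proof -
    obtain \<alpha> p where \<alpha>: "\<alpha> \<ge> 0" "p \<in> \<Omega>" "a = \<alpha> *\<^sub>R p" using a by (rule pos_coneE)
    obtain \<beta> q where \<beta>: "\<beta> \<ge> 0" "q \<in> \<Omega>" "b = \<beta> *\<^sub>R q" using b by (rule pos_coneE)
    define r where "r = (\<alpha> / (\<alpha> + \<beta>)) *\<^sub>R p + (\<beta> / (\<alpha> + \<beta>)) *\<^sub>R q"
    have "\<alpha> + \<beta> \<noteq> 0" using \<alpha> \<beta> ab \<open>w \<noteq> 0\<close> by (auto simp: add_nonneg_eq_0_iff)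
    then have "w = (\<alpha> + \<beta>) *\<^sub>R r" using \<alpha> \<beta> ab by (simp add: r_def scaleR_add_right)
    moreover have "r \<in> affine hull \<Omega>"
      unfolding r_def using \<alpha>(2) \<beta>(2) \<open>\<alpha> + \<beta> \<noteq> 0\<close> hull
      by (intro mem_affine[OF affine_affine_hull]) (auto simp: add_divide_distrib[symmetric])
    moreover have "w \<in> affine hull \<Omega>" using \<open>w \<in> \<Omega>\<close> hull by auto
    ultimately have "\<alpha> + \<beta> = 1" using scaleR_mem_affine_hull_eq_1[OF aff, of r "\<alpha> + \<beta>"] by simp
    then have "\<alpha> = 0 \<or> p = w"
      using \<alpha> \<beta> ab by (intro extreme_point_convex_combination[OF w \<alpha>(2) \<beta>(2)]) auto
    then show ?thesis using \<alpha>(3) by auto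
  qed
  then show ?thesis
    unfolding generates_extreme_ray_def using \<open>w \<in> \<Omega>\<close> \<open>w \<noteq> 0\<close> pos_coneI[of 1 w] by auto
qed

lemma generates_extreme_ray_imp_extreme_point:
  assumes aff: "0 \<notin> affine hull \<Omega>" and x: "generates_extreme_ray (pos_cone \<Omega>) x"
  shows "\<exists>t>0. \<exists>e. e extreme_point_of \<Omega> \<and> x = t *\<^sub>R e"
proof -
  obtain t w where t: "t \<ge> 0" "w \<in> \<Omega>" "x = t *\<^sub>R w"
    using x unfolding generates_extreme_ray_def by (blast elim: pos_coneE)
  have "t > 0" using t x unfolding generates_extreme_ray_def by (cases "t = 0") auto
  have "w \<notin> open_segment a b" if a: "a \<in> \<Omega>" and b: "b \<in> \<Omega>" for a b
  proof
    assume "w \<in> open_segment a b"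
    then obtain u where u: "0 < u" "u < 1" and wu: "w = (1 - u) *\<^sub>R a + u *\<^sub>R b"
      unfolding in_segment by blast
    have "(t * (1 - u)) *\<^sub>R a \<in> pos_cone \<Omega>" "(t * u) *\<^sub>R b \<in> pos_cone \<Omega>"
      using t(1) u a b by (auto intro!: pos_coneI)
    moreover have "(t * (1 - u)) *\<^sub>R a + (t * u) *\<^sub>R b = x"
      using t wu by (simp add: scaleR_add_right)
    ultimately obtain s where s: "(t * (1 - u)) *\<^sub>R a = s *\<^sub>R x"
      using x unfolding generates_extreme_ray_def by blast
    have "t * (1 - u) \<noteq> 0" using \<open>t > 0\<close> u by simp
    then have "a = (1 / (t * (1 - u))) *\<^sub>R ((t * (1 - u)) *\<^sub>R a)" by simp
    also have "\<dots> = ((s * t) / (t * (1 - u))) *\<^sub>R w" unfolding s t(3) by simp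
    finally have "a = ((s * t) / (t * (1 - u))) *\<^sub>R w" .
    moreover have "a \<in> affine hull \<Omega>" "w \<in> affine hull \<Omega>"
      using a t(2) hull_subset[of \<Omega> affine] by auto
    ultimately have "a = w"
      using scaleR_mem_affine_hull_eq_1[OF aff, of w "(s * t) / (t * (1 - u))"] by simp
    then show False using \<open>w \<in> open_segment a b\<close> by (simp add: open_segment_def)
  qed
  then have "w extreme_point_of \<Omega>" using t(2) by (simp add: extreme_point_of_def)
  then show ?thesis using \<open>t > 0\<close> t(3) by blast
qed

lemma generates_extreme_ray_linear_image:
  assumes L: "linear L" "inj L" "L ` P = P" and x: "generates_extreme_ray P x"
  shows "generates_extreme_ray P (L x)"
proof -
  have "x \<in> P" "x \<noteq> 0"
    and ray: "\<And>a b. a \<in> P \<Longrightarrow> b \<in> P \<Longrightarrow> a + b = x \<Longrightarrow> \<exists>s. a = s *\<^sub>R x"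
    using x unfolding generates_extreme_ray_def by auto
  have "L x \<in> P" using \<open>x \<in> P\<close> L(3) by (metis imageI)
  moreover have "L x \<noteq> 0" using \<open>x \<noteq> 0\<close> L(1,2) by (metis linear_injective_0)
  moreover have "\<exists>s. a = s *\<^sub>R L x" if a: "a \<in> P" and b: "b \<in> P" and ab: "a + b = L x" for a b
  proof -
    have "a \<in> L ` P" "b \<in> L ` P" using a b L(3) by simp_all
    then obtain a' b' where "a' \<in> P" "b' \<in> P" "a = L a'" "b = L b'" by blast
    moreover from this have "a' + b' = x" using ab L(1,2) by (simp add: linear_add[symmetric] inj_eq)
    ultimately obtain s where "a' = s *\<^sub>R x" using ray by blast
    then show ?thesis using \<open>a = L a'\<close> linear_scale[OF L(1)] by simp
  qed
  ultimately show ?thesis unfolding generates_extreme_ray_def by blast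
qed

lemma cone_automorphism_eigenvector_at_extreme_point:
  fixes \<Omega> :: "'a::real_vector set" and M :: "'a \<Rightarrow> 'a" and B :: "'a \<Rightarrow> 'a \<Rightarrow> real"
  assumes aff: "0 \<notin> affine hull \<Omega>" and fin: "finite {w. w extreme_point_of \<Omega>}"
    and linM: "linear M" and MP: "M ` pos_cone \<Omega> = pos_cone \<Omega>"
    and B_linear: "\<And>x. linear (B x)" and B_pos: "\<And>x. x \<noteq> 0 \<Longrightarrow> B x x > 0"
    and adj: "\<And>x y. B x (M y) = B (M x) y" and M_pos: "\<And>x. x \<noteq> 0 \<Longrightarrow> B x (M x) > 0"
    and w: "w extreme_point_of \<Omega>"
  shows "\<exists>\<mu>>0. M w = \<mu> *\<^sub>R w"
proof -
  have "inj M" by (rule positive_definite_imp_inj[OF linM B_linear M_pos])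
  have "generates_extreme_ray (pos_cone \<Omega>) ((M ^^ k) w)" for k
    by (induction k)
      (simp_all add: extreme_point_generates_extreme_ray[OF aff w]
        generates_extreme_ray_linear_image[OF linM \<open>inj M\<close> MP])
  then have "\<exists>t>0. \<exists>e\<in>{w. w extreme_point_of \<Omega>}. (M ^^ k) w = t *\<^sub>R e" for k
    using generates_extreme_ray_imp_extreme_point[OF aff, of "(M ^^ k) w"] by simp
  then obtain a b c where "a < b" "c > 0" and abc: "(M ^^ b) w = c *\<^sub>R (M ^^ a) w"
    using exists_proportional_pair[OF fin, of "\<lambda>k. (M ^^ k) w"] by blast
  define u where "u = (M ^^ a) w"
  have "(M ^^ (b - a)) u = c *\<^sub>R u"
  proof -
    have "(M ^^ (b - a)) u = (M ^^ (b - a + a)) w" by (simp add: u_def funpow_add)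
    then show ?thesis using \<open>a < b\<close> abc by (simp add: u_def)
  qed
  moreover have "B x (M x) \<ge> 0" for x
    using M_pos[of x] linear_0[OF B_linear] linear_0[OF linM] by (cases "x = 0") auto
  ultimately have "M u = root (b - a) c *\<^sub>R u"
    using \<open>a < b\<close> \<open>c > 0\<close>
    by (intro funpow_eigenvector_imp_eigenvector[OF linM B_linear B_pos adj]) simp_all
  then have "(M ^^ a) (M w) = (M ^^ a) (root (b - a) c *\<^sub>R w)"
    using linear_scale[OF linear_funpow[OF linM]] by (simp add: u_def funpow_swap1)
  then have "M w = root (b - a) c *\<^sub>R w" using inj_fn[OF \<open>inj M\<close>] by (simp add: inj_eq)
  then show ?thesis using \<open>a < b\<close> \<open>c > 0\<close> by (intro exI[of _ "root (b - a) c"]) simp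
qed

lemma strictly_positive_quotient:
  fixes ip :: "'a::euclidean_space \<Rightarrow> 'a \<Rightarrow> real" and J K :: "'a \<Rightarrow> 'a"
  assumes ip_linear: "\<And>x. linear (ip x)" and J: "linear J" and K: "linear K"
    and "strictly_positive ip J" "strictly_positive ip K"
  obtains M where "linear M" "\<And>x. J (M x) = K x"
    "\<And>x y. ip x (J (M y)) = ip (M x) (J y)" "\<And>x. x \<noteq> 0 \<Longrightarrow> ip x (J (M x)) > 0"
proof -
  have J_adj: "\<And>x y. ip x (J y) = ip (J x) y" and J_pos: "\<And>x. x \<noteq> 0 \<Longrightarrow> ip x (J x) > 0"
    and K_adj: "\<And>x y. ip x (K y) = ip (K x) y" and K_pos: "\<And>x. x \<noteq> 0 \<Longrightarrow> ip x (K x) > 0"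
    using assms(4,5) unfolding strictly_positive_def by blast+
  obtain Ji where Ji: "linear Ji" "\<And>x. J (Ji x) = x"
    using linear_injective_isomorphism[OF J positive_definite_imp_inj[OF J ip_linear J_pos]]
    by blast
  have JM: "J (Ji (K x)) = K x" for x by (rule Ji(2))
  show ?thesis
  proof (rule that[of "Ji \<circ> K"])
    show "linear (Ji \<circ> K)" by (rule linear_compose[OF K Ji(1)])
    show "ip x (J ((Ji \<circ> K) y)) = ip ((Ji \<circ> K) x) (J y)" for x y
    proof -
      have "ip x (J (Ji (K y))) = ip (J (Ji (K x))) y" by (simp add: JM K_adj)
      then show ?thesis by (simp add: J_adj)
    qed
  qed (simp_all add: JM K_pos)
qed

theorem lemmaB4:
  fixes \<Omega> :: "(real ^ 'n) set"
    and ip :: "real ^ 'n \<Rightarrow> real ^ 'n \<Rightarrow> real"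
    and J K :: "real ^ 'n \<Rightarrow> real ^ 'n"
  assumes "state_space \<Omega>"
    and "finite {w. w extreme_point_of \<Omega>}"
    and "is_inner_product ip"
    and "linear J" and "linear K"
    and "strictly_positive ip J" and "strictly_positive ip K"
    and "J ` pos_cone \<Omega> = internal_dual_cone ip (pos_cone \<Omega>)"
    and "K ` pos_cone \<Omega> = internal_dual_cone ip (pos_cone \<Omega>)"
  shows "\<forall>w. w extreme_point_of \<Omega> \<longrightarrow> (\<exists>\<mu>>0. K w = \<mu> *\<^sub>R J w)"
proof (intro allI impI)
  fix w assume w: "w extreme_point_of \<Omega>"
  have aff: "0 \<notin> affine hull \<Omega>" using assms(1) by (simp add: state_space_def)
  have ip_linear: "\<And>x. linear (ip x)"
    using assms(3) by (simp add: is_inner_product_def bilinear_def)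
  have B_linear: "linear (\<lambda>y. ip x (J y))" for x
    using linear_compose[OF assms(4) ip_linear[of x]] by (simp add: o_def)
  have J_pos: "\<And>x. x \<noteq> 0 \<Longrightarrow> ip x (J x) > 0"
    using assms(6) unfolding strictly_positive_def by blast
  obtain M where M: "linear M" "\<And>x. J (M x) = K x"
    "\<And>x y. ip x (J (M y)) = ip (M x) (J y)" "\<And>x. x \<noteq> 0 \<Longrightarrow> ip x (J (M x)) > 0"
    using strictly_positive_quotient[OF ip_linear assms(4-7)] by blast
  have "J ` M ` pos_cone \<Omega> = J ` pos_cone \<Omega>"
    using assms(8,9) by (simp add: image_image M(2))
  then have "M ` pos_cone \<Omega> = pos_cone \<Omega>"
    using positive_definite_imp_inj[OF assms(4) ip_linear J_pos] by (simp add: inj_image_eq_iff)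
  then obtain \<mu> where "\<mu> > 0" "M w = \<mu> *\<^sub>R w"
    using cone_automorphism_eigenvector_at_extreme_point[OF aff assms(2) M(1) _ B_linear J_pos
        M(3,4) w]
    by blast
  then show "\<exists>\<mu>>0. K w = \<mu> *\<^sub>R J w" by (metis M(2) linear_scale[OF assms(4)])
qed

end
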